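(* In the real projective plane, let $\Gamma$ be the degenerate conic given by a pair of distinct lines $g_1,g_2$, and let $\mathcal{C}^*$ be the degenerate dual conic given by a pair of distinct points $C_1,C_2$. Consider polygonal lines inscribed in $\Gamma$ and circumscribed about $\mathcal{C}^*$. Such a polygonal line is periodic with period $n$ if and only if $n=4$ and the lines $g_1$ and $g_2$ intersect the line $C_1C_2$ in a pair of points which is harmonically conjugate to the pair $C_1,C_2$.
   Context: $\mathcal{C}^*$ is the union of the pencils of lines through $C_1$ and through $C_2$. A polygonal line $A_1A_2\dots$ is inscribed in $\Gamma$ and circumscribed about $\mathcal{C}^*$ if its vertices lie alternately on $g_1$ and $g_2$ and its side lines $A_iA_{i+1}$ pass alternately through $C_1$ and $C_2$; it is periodic with period $n$ if $A_{i+n}=A_i$ for all $i$. Points $D_1,D_2$ on the line $C_1C_2$ form a pair harmonically conjugate to $C_1,C_2$ if the cross-ratio $(C_1,C_2;D_1,D_2)$ equals $-1$. *)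

theory Defs
  imports "HOL-Analysis.Analysis"
begin

text \<open>Real projective plane modelled on homogeneous coordinates: a projective point
  is a 1-dimensional linear subspace of real^3, a projective line a 2-dimensional one.
  Incidence is inclusion.\<close>

type_synonym pobj = "(real^3) set"

definition proj_point :: "pobj \<Rightarrow> bool" where
  "proj_point P \<longleftrightarrow> subspace P \<and> dim P = 1"

definition proj_line :: "pobj \<Rightarrow> bool" where
  "proj_line L \<longleftrightarrow> subspace L \<and> dim L = 2"

definition join :: "pobj \<Rightarrow> pobj \<Rightarrow> pobj" where
  "join P Q = span (P \<union> Q)"

definition meet :: "pobj \<Rightarrow> pobj \<Rightarrow> pobj" where
  "meet L M = L \<inter> M"

text \<open>Cross-ratio (C1,C2;D1,D2) = r for four collinear points, with C1, C2 distinct and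
  D1, D2 different from C1, C2: writing D_j = [a_j c1 + b_j c2] for representatives
  c1, c2 of C1, C2, the cross-ratio is (b1 a2)/(a1 b2) (independent of all choices).\<close>
definition cross_ratio_is :: "pobj \<Rightarrow> pobj \<Rightarrow> pobj \<Rightarrow> pobj \<Rightarrow> real \<Rightarrow> bool" where
  "cross_ratio_is C1 C2 D1 D2 r \<longleftrightarrow>
     (\<exists>c1 c2 a1 b1 a2 b2. c1 \<noteq> 0 \<and> c2 \<noteq> 0 \<and> C1 \<noteq> C2 \<and>
        C1 = span {c1} \<and> C2 = span {c2} \<and>
        D1 = span {a1 *\<^sub>R c1 + b1 *\<^sub>R c2} \<and> D2 = span {a2 *\<^sub>R c1 + b2 *\<^sub>R c2} \<and>
        a1 \<noteq> 0 \<and> b1 \<noteq> 0 \<and> a2 \<noteq> 0 \<and> b2 \<noteq> 0 \<and>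
        r = (b1 * a2) / (a1 * b2))"

definition harmonic_pair :: "pobj \<Rightarrow> pobj \<Rightarrow> pobj \<Rightarrow> pobj \<Rightarrow> bool" where
  "harmonic_pair C1 C2 D1 D2 \<longleftrightarrow> cross_ratio_is C1 C2 D1 D2 (-1)"

text \<open>A polygonal line A_0 A_1 ... with A_{2k} on g, A_{2k+1} on h, side A_{2k}A_{2k+1}
  through P and side A_{2k+1}A_{2k+2} through Q; consecutive vertices distinct (so the
  side lines are defined) and consecutive side lines distinct (genuine polygonal line).\<close>
definition alt_polygon :: "pobj \<Rightarrow> pobj \<Rightarrow> pobj \<Rightarrow> pobj \<Rightarrow> (nat \<Rightarrow> pobj) \<Rightarrow> bool" where
  "alt_polygon g h P Q A \<longleftrightarrow>
     (\<forall>i. proj_point (A i)) \<and>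
     (\<forall>i. A i \<noteq> A (Suc i)) \<and>
     (\<forall>i. join (A i) (A (Suc i)) \<noteq> join (A (Suc i)) (A (Suc (Suc i)))) \<and>
     (\<forall>k. A (2*k) \<subseteq> g \<and> A (2*k+1) \<subseteq> h) \<and>
     (\<forall>k. P \<subseteq> join (A (2*k)) (A (2*k+1)) \<and> Q \<subseteq> join (A (2*k+1)) (A (2*k+2)))"

text \<open>Inscribed in g1 \<union> g2 and circumscribed about the pencils through C1, C2:
  vertices alternately on g1, g2 and sides alternately through C1, C2
  (starting with either line and either point).\<close>
definition inscribed_circumscribed ::
  "pobj \<Rightarrow> pobj \<Rightarrow> pobj \<Rightarrow> pobj \<Rightarrow> (nat \<Rightarrow> pobj) \<Rightarrow> bool" where
  "inscribed_circumscribed g1 g2 C1 C2 A \<longleftrightarrow>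
     alt_polygon g1 g2 C1 C2 A \<or> alt_polygon g2 g1 C1 C2 A \<or>
     alt_polygon g1 g2 C2 C1 A \<or> alt_polygon g2 g1 C2 C1 A"

definition has_period :: "(nat \<Rightarrow> pobj) \<Rightarrow> nat \<Rightarrow> bool" where
  "has_period A n \<longleftrightarrow> 0 < n \<and> (\<forall>i. A (i + n) = A i) \<and>
     (\<forall>m. 0 < m \<and> m < n \<longrightarrow> \<not> (\<forall>i. A (i + m) = A i))"

end

theory Submission
  imports Defs
begin

text \<open>Write g = a^\<bottom>, h = b^\<bottom>, C1 = [p], C2 = [q]. Projecting a point of g from C1 onto h
  and then from C2 back onto g is induced by a linear map M of the plane a^\<bottom>, with eigenvalue
  \<alpha> at g \<inter> h and eigenvalue \<mu> at g \<inter> C1C2; explicitly M^k x = \<alpha>^k x + c_k (b \<bullet> x) r with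
  c_k = (\<mu>^k - \<alpha>^k)/(\<mu> - \<alpha>), read as k \<alpha>^(k-1) when \<mu> = \<alpha>. The vertices on g are the
  points [M^k v], and [M v] \<noteq> [v] because consecutive sides differ, so the first vertex recurs
  only if c_k = 0, i.e. \<mu> = -\<alpha>; then M^2 = \<alpha>^2 on a^\<bottom> and the polygon closes after four sides.
  Odd periods are impossible because the first vertex is not on h. Finally the cross-ratio
  (C1, C2; g \<inter> C1C2, h \<inter> C1C2) equals \<mu>/\<alpha>, so \<mu> = -\<alpha> is exactly the harmonic condition.\<close>

section \<open>Lines and points of the projective plane as vectors\<close>

lemma span_singleton_scaleR:
  fixes x :: "'a::real_vector"
  assumes "c \<noteq> 0"
  shows "span {c *\<^sub>R x} = span {x}"
proof -
  have "x = inverse c *\<^sub>R (c *\<^sub>R x)" using assms by simp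
  then have "x \<in> span {c *\<^sub>R x}" by (metis span_base span_scale singletonI)
  moreover have "c *\<^sub>R x \<in> span {x}" by (simp add: span_base span_scale)
  ultimately show ?thesis by (simp add: span_eq)
qed

lemma span_singleton_eq_of_mem:
  fixes x y :: "'a::real_vector"
  assumes "y \<in> span {x}" "y \<noteq> 0"
  shows "span {y} = span {x}"
proof -
  obtain c where "y = c *\<^sub>R x" using assms(1) by (auto simp: span_singleton)
  with assms(2) show ?thesis by (simp add: span_singleton_scaleR)
qed

lemma mem_span_pair: "x \<in> span {u, w} \<longleftrightarrow> (\<exists>s t. x = s *\<^sub>R u + t *\<^sub>R w)"
  by (auto simp: span_insert span_singleton) (metis add.commute diff_add_cancel, metis add_diff_cancel_left')

lemma span_singleton_subset_hyperplane [simp]: "span {x} \<subseteq> {y. a \<bullet> y = 0} \<longleftrightarrow> a \<bullet> x = 0"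
  using span_base[of x "{x}"] by (auto simp: span_singleton)

lemma scaleR_add_scaleR_eq_0_imp:
  fixes p q :: "'a::real_vector"
  assumes "p \<noteq> 0" "q \<notin> span {p}" "x *\<^sub>R p + y *\<^sub>R q = 0"
  shows "x = 0" "y = 0"
proof -
  show "y = 0"
  proof (rule ccontr)
    assume "y \<noteq> 0"
    have "y *\<^sub>R q = - (x *\<^sub>R p)" using assms(3) by (simp add: eq_neg_iff_add_eq_0 add.commute)
    then have "y *\<^sub>R q \<in> span {p}" by (simp add: span_base span_scale span_neg)
    then have "inverse y *\<^sub>R (y *\<^sub>R q) \<in> span {p}" by (rule span_scale)
    then show False using \<open>y \<noteq> 0\<close> assms(2) by simp
  qed
  then show "x = 0" using assms(1,3) by simp
qed

lemma span_combination_eq: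
  fixes p q :: "'a::real_vector"
  assumes "p \<noteq> 0" "q \<notin> span {p}" "span {x *\<^sub>R p + y *\<^sub>R q} = span {x' *\<^sub>R p + y' *\<^sub>R q}"
  obtains m where "x = m * x'" "y = m * y'"
proof -
  have "x *\<^sub>R p + y *\<^sub>R q \<in> span {x' *\<^sub>R p + y' *\<^sub>R q}" using assms(3) span_base by blast
  then obtain m where "x *\<^sub>R p + y *\<^sub>R q = m *\<^sub>R (x' *\<^sub>R p + y' *\<^sub>R q)" by (auto simp: span_singleton)
  then have "(x - m * x') *\<^sub>R p + (y - m * y') *\<^sub>R q = 0" by (simp add: algebra_simps)
  then have "x - m * x' = 0" "y - m * y' = 0" by (rule scaleR_add_scaleR_eq_0_imp[OF assms(1,2)])+
  then show thesis using that[of m] by simp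
qed

lemma proj_pointE:
  assumes "proj_point P"
  obtains p where "p \<noteq> 0" "P = span {p}"
proof -
  have P: "subspace P" "dim P = 1" using assms by (auto simp: proj_point_def)
  obtain B where B: "B \<subseteq> P" "independent B" "P \<subseteq> span B" "card B = dim P"
    using basis_exists[of P] by metis
  then obtain p where p: "B = {p}" using P(2) by (metis card_1_singletonE)
  have "p \<noteq> 0" using B(2) dependent_zero[of B] p by auto
  moreover have "span B \<subseteq> P" using B(1) P(1) by (rule span_minimal)
  then have "P = span {p}" using B(3) p by auto
  ultimately show thesis by (rule that)
qed

lemma proj_lineE:
  assumes "proj_line L"
  obtains a where "a \<noteq> 0" "L = {x. a \<bullet> x = 0}"
proof -
  have L: "subspace L" "dim L = DIM(real^3) - 1" using assms by (simp_all add: proj_line_def)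
  obtain a where "a \<noteq> 0" "span L = {x. a \<bullet> x = 0}" using L(2) by (rule lowdim_eq_hyperplane)
  moreover have "span L = L" using L(1) by simp
  ultimately show thesis using that by simp
qed

lemma join_span_singletons: "join (span {x}) (span {y}) = span {x, y}"
proof -
  have "span {x} \<union> span {y} \<subseteq> span {x, y}" by (simp add: span_mono)
  moreover have "{x, y} \<subseteq> span (span {x} \<union> span {y})" by (simp add: span_base)
  ultimately show ?thesis unfolding join_def span_eq by (simp add: span_span)
qed

lemma meet_hyperplane_join:
  fixes a p q :: "real^3"
  assumes "a \<bullet> p \<noteq> 0"
  shows "meet {x. a \<bullet> x = 0} (join (span {p}) (span {q})) = span {(- (a \<bullet> q)) *\<^sub>R p + (a \<bullet> p) *\<^sub>R q}"
    (is "_ = span {?r}")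
proof -
  have "x \<in> {x. a \<bullet> x = 0} \<inter> span {p, q} \<longleftrightarrow> x \<in> span {?r}" for x
  proof
    assume "x \<in> {x. a \<bullet> x = 0} \<inter> span {p, q}"
    then obtain s t where x: "x = s *\<^sub>R p + t *\<^sub>R q" and "a \<bullet> x = 0" by (auto simp: mem_span_pair)
    then have "s * (a \<bullet> p) + t * (a \<bullet> q) = 0" by (simp add: inner_add_right)
    then have "s = - t * (a \<bullet> q) / (a \<bullet> p)" using assms by (simp add: field_simps)
    then have "x = (t / (a \<bullet> p)) *\<^sub>R ?r" using x assms by (simp add: algebra_simps)
    then show "x \<in> span {?r}" by (simp add: span_base span_scale)
  next
    assume "x \<in> span {?r}"
    then obtain c where x: "x = c *\<^sub>R ?r" by (auto simp: span_singleton)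
    then have "a \<bullet> x = 0" unfolding x by (simp add: inner_add_right algebra_simps)
    moreover have "x \<in> span {p, q}" unfolding mem_span_pair x by (metis scaleR_right_distrib scaleR_scaleR)
    ultimately show "x \<in> {x. a \<bullet> x = 0} \<inter> span {p, q}" by simp
  qed
  then show ?thesis by (auto simp: meet_def join_span_singletons)
qed

section \<open>Cross-ratios\<close>

lemma cross_ratio_is_iff:
  fixes p q :: "real^3"
  assumes p: "p \<noteq> 0" and q: "q \<noteq> 0" "span {p} \<noteq> span {q}"
    and "x1 \<noteq> 0" "y1 \<noteq> 0" "x2 \<noteq> 0" "y2 \<noteq> 0"
  shows "cross_ratio_is (span {p}) (span {q}) (span {x1 *\<^sub>R p + y1 *\<^sub>R q}) (span {x2 *\<^sub>R p + y2 *\<^sub>R q}) c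
    \<longleftrightarrow> c = (y1 * x2) / (x1 * y2)"
proof
  assume "c = (y1 * x2) / (x1 * y2)"
  then show "cross_ratio_is (span {p}) (span {q}) (span {x1 *\<^sub>R p + y1 *\<^sub>R q}) (span {x2 *\<^sub>R p + y2 *\<^sub>R q}) c"
    unfolding cross_ratio_is_def using assms by blast
next
  assume "cross_ratio_is (span {p}) (span {q}) (span {x1 *\<^sub>R p + y1 *\<^sub>R q}) (span {x2 *\<^sub>R p + y2 *\<^sub>R q}) c"
  then obtain c1 c2 a1 b1 a2 b2 where c: "span {p} = span {c1}" "span {q} = span {c2}" "c1 \<noteq> 0" "c2 \<noteq> 0"
    and D: "span {x1 *\<^sub>R p + y1 *\<^sub>R q} = span {a1 *\<^sub>R c1 + b1 *\<^sub>R c2}"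
      "span {x2 *\<^sub>R p + y2 *\<^sub>R q} = span {a2 *\<^sub>R c1 + b2 *\<^sub>R c2}"
    and nz: "a1 \<noteq> 0" "b2 \<noteq> 0" and c_eq: "c = (b1 * a2) / (a1 * b2)"
    unfolding cross_ratio_is_def by blast
  have "q \<notin> span {p}" using q span_singleton_eq_of_mem by metis
  obtain s where s: "c1 = s *\<^sub>R p" using c(1) span_base[of c1 "{c1}"] by (auto simp: span_singleton)
  obtain t where t: "c2 = t *\<^sub>R q" using c(2) span_base[of c2 "{c2}"] by (auto simp: span_singleton)
  have "s \<noteq> 0" "t \<noteq> 0" using s t c(3,4) by auto
  have "span {x1 *\<^sub>R p + y1 *\<^sub>R q} = span {(a1 * s) *\<^sub>R p + (b1 * t) *\<^sub>R q}" using D(1) by (simp add: s t)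
  then obtain m where m: "x1 = m * (a1 * s)" "y1 = m * (b1 * t)"
    by (rule span_combination_eq[OF p \<open>q \<notin> span {p}\<close>])
  have "span {x2 *\<^sub>R p + y2 *\<^sub>R q} = span {(a2 * s) *\<^sub>R p + (b2 * t) *\<^sub>R q}" using D(2) by (simp add: s t)
  then obtain k where k: "x2 = k * (a2 * s)" "y2 = k * (b2 * t)"
    by (rule span_combination_eq[OF p \<open>q \<notin> span {p}\<close>])
  have "m \<noteq> 0" "k \<noteq> 0" using m k assms(4,7) by auto
  then show "c = (y1 * x2) / (x1 * y2)"
    using c_eq m k nz \<open>s \<noteq> 0\<close> \<open>t \<noteq> 0\<close> by (simp add: field_simps)
qed

lemma harmonic_pair_meet_iff:
  fixes a b p q :: "real^3"
  assumes "p \<noteq> 0" "q \<noteq> 0" "span {p} \<noteq> span {q}"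
    and "a \<bullet> p \<noteq> 0" "b \<bullet> p \<noteq> 0" "a \<bullet> q \<noteq> 0" "b \<bullet> q \<noteq> 0"
  shows "harmonic_pair (span {p}) (span {q})
      (meet {x. a \<bullet> x = 0} (join (span {p}) (span {q}))) (meet {x. b \<bullet> x = 0} (join (span {p}) (span {q})))
    \<longleftrightarrow> (a \<bullet> p) * (b \<bullet> q) = - ((a \<bullet> q) * (b \<bullet> p))"
proof -
  have "harmonic_pair (span {p}) (span {q})
      (meet {x. a \<bullet> x = 0} (join (span {p}) (span {q}))) (meet {x. b \<bullet> x = 0} (join (span {p}) (span {q})))
    \<longleftrightarrow> -1 = ((a \<bullet> p) * - (b \<bullet> q)) / (- (a \<bullet> q) * (b \<bullet> p))"
    unfolding harmonic_pair_def meet_hyperplane_join[OF assms(4)] meet_hyperplane_join[OF assms(5)]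
    by (rule cross_ratio_is_iff) (use assms in simp_all)
  then show ?thesis using assms by (auto simp: field_simps)
qed

lemma harmonic_pair_swap:
  assumes "harmonic_pair C1 C2 D1 D2"
  shows "harmonic_pair C2 C1 D1 D2" and "harmonic_pair C1 C2 D2 D1"
proof -
  obtain c1 c2 a1 b1 a2 b2 where "c1 \<noteq> 0" "c2 \<noteq> 0" "C1 \<noteq> C2" "C1 = span {c1}" "C2 = span {c2}"
      "D1 = span {a1 *\<^sub>R c1 + b1 *\<^sub>R c2}" "D2 = span {a2 *\<^sub>R c1 + b2 *\<^sub>R c2}"
      "a1 \<noteq> 0" "b1 \<noteq> 0" "a2 \<noteq> 0" "b2 \<noteq> 0" "-1 = (b1 * a2) / (a1 * b2)"
    using assms unfolding harmonic_pair_def cross_ratio_is_def by blast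
  moreover have "(a1 * b2) / (b1 * a2) = -1" "(b2 * a1) / (a2 * b1) = -1"
    using calculation by (simp_all add: field_simps)
  ultimately show "harmonic_pair C2 C1 D1 D2" "harmonic_pair C1 C2 D2 D1"
    unfolding harmonic_pair_def cross_ratio_is_def by (metis add.commute)+
qed

section \<open>The return map\<close>

text \<open>For b \<bullet> p \<noteq> 0, [central_proj b p x] is the point where the line through [x] and [p]
  meets the line b^\<bottom>.\<close>

definition central_proj :: "'a::real_inner \<Rightarrow> 'a \<Rightarrow> 'a \<Rightarrow> 'a" where
  "central_proj b p x = (b \<bullet> p) *\<^sub>R x - (b \<bullet> x) *\<^sub>R p"

lemma inner_central_proj [simp]: "b \<bullet> central_proj b p x = 0"
  by (simp add: central_proj_def inner_diff_right)

lemma central_proj_scaleR: "central_proj b p (c *\<^sub>R x) = c *\<^sub>R central_proj b p x"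
  by (simp add: central_proj_def algebra_simps)

lemma span_central_proj:
  fixes b p u w :: "'a::real_inner"
  assumes "p \<in> span {u, w}" "p \<notin> span {u}" "b \<bullet> w = 0" "b \<bullet> p \<noteq> 0"
  shows "span {central_proj b p u} = span {w}"
proof -
  obtain s t where p: "p = s *\<^sub>R u + t *\<^sub>R w" using assms(1) by (auto simp: mem_span_pair)
  have "t \<noteq> 0" using p assms(2) by (auto simp: span_singleton)
  have bp: "b \<bullet> p = s * (b \<bullet> u)" using p assms(3) by (simp add: inner_add_right)
  then have "b \<bullet> u \<noteq> 0" using assms(4) by auto
  define c where "c = - (b \<bullet> u) * t"
  have "central_proj b p u = c *\<^sub>R w"
    using p bp by (simp add: central_proj_def c_def algebra_simps)
  moreover have "c \<noteq> 0" using \<open>t \<noteq> 0\<close> \<open>b \<bullet> u \<noteq> 0\<close> by (simp add: c_def)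
  ultimately show ?thesis by (simp add: span_singleton_scaleR)
qed

lemma power_sum_eq_0_imp_eq_neg:
  fixes \<alpha> \<mu> :: real
  assumes "\<alpha> \<noteq> 0" "0 < k" "(\<Sum>i<k. \<alpha> ^ (k - Suc i) * \<mu> ^ i) = 0"
  shows "\<mu> = - \<alpha>"
proof (cases "\<mu> = \<alpha>")
  case True
  have "(\<Sum>i<k. \<alpha> ^ (k - Suc i) * \<alpha> ^ i) = (\<Sum>i<k. \<alpha> ^ (k - 1))"
    by (rule sum.cong) (auto simp flip: power_add)
  then show ?thesis using True assms by simp
next
  case False
  have "\<mu> ^ k = \<alpha> ^ k" using power_diff_sumr2[of \<mu> k \<alpha>] assms(3) by simp
  then have "\<bar>\<mu>\<bar> = \<bar>\<alpha>\<bar>" using assms(2) by (metis abs_ge_zero power_abs power_eq_imp_eq_base)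
  then show ?thesis using False by (auto simp: abs_if split: if_splits)
qed

locale projection_pair =
  fixes a b p q :: "'a::real_inner"
begin

definition return_map :: "'a \<Rightarrow> 'a" where
  "return_map x = central_proj a q (central_proj b p x)"

definition \<alpha> :: real where "\<alpha> = (a \<bullet> q) * (b \<bullet> p)"
definition \<mu> :: real where "\<mu> = (a \<bullet> p) * (b \<bullet> q)"

text \<open>[r] is the point where the line a^\<bottom> meets the line through [p] and [q].\<close>
definition r :: 'a where "r = (a \<bullet> p) *\<^sub>R q - (a \<bullet> q) *\<^sub>R p"

lemma inner_r: "a \<bullet> r = 0" "b \<bullet> r = \<mu> - \<alpha>"
  by (simp_all add: r_def \<alpha>_def \<mu>_def inner_diff_right)

lemma return_map_on_line: "a \<bullet> x = 0 \<Longrightarrow> return_map x = \<alpha> *\<^sub>R x + (b \<bullet> x) *\<^sub>R r"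
  by (simp add: return_map_def central_proj_def \<alpha>_def r_def inner_diff_right algebra_simps)

lemma inner_funpow_return_map:
  assumes "a \<bullet> x = 0"
  shows "a \<bullet> (return_map ^^ k) x = 0" "b \<bullet> (return_map ^^ k) x = \<mu> ^ k * (b \<bullet> x)"
proof -
  show a: "a \<bullet> (return_map ^^ k) x = 0" for k
    using assms by (cases k) (simp_all add: return_map_def)
  show "b \<bullet> (return_map ^^ k) x = \<mu> ^ k * (b \<bullet> x)"
  proof (induction k)
    case (Suc k)
    then show ?case
      using return_map_on_line[OF a[of k]] by (simp add: inner_add_right inner_r algebra_simps)
  qed simp
qed

lemma funpow_return_map:
  assumes "a \<bullet> x = 0"
  shows "(return_map ^^ k) x = \<alpha> ^ k *\<^sub>R x + ((b \<bullet> x) * (\<Sum>i<k. \<alpha> ^ (k - Suc i) * \<mu> ^ i)) *\<^sub>R r"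
proof (induction k)
  case (Suc k)
  have "(\<Sum>i<k. \<alpha> ^ (k - i) * \<mu> ^ i) = (\<Sum>i<k. \<alpha> * (\<alpha> ^ (k - Suc i) * \<mu> ^ i))"
    by (intro sum.cong refl) (metis Suc_diff_Suc lessThan_iff mult.assoc power_Suc)
  then have sum: "(\<Sum>i<Suc k. \<alpha> ^ (Suc k - Suc i) * \<mu> ^ i) = \<alpha> * (\<Sum>i<k. \<alpha> ^ (k - Suc i) * \<mu> ^ i) + \<mu> ^ k"
    by (simp add: sum_distrib_left)
  have "(return_map ^^ Suc k) x = \<alpha> *\<^sub>R (return_map ^^ k) x + (\<mu> ^ k * (b \<bullet> x)) *\<^sub>R r"
    using return_map_on_line inner_funpow_return_map[OF assms] by simp
  also have "\<dots> = \<alpha> ^ Suc k *\<^sub>R x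
      + ((b \<bullet> x) * (\<alpha> * (\<Sum>i<k. \<alpha> ^ (k - Suc i) * \<mu> ^ i) + \<mu> ^ k)) *\<^sub>R r"
    unfolding Suc.IH by (simp add: algebra_simps)
  finally show ?case by (simp only: sum)
qed simp

lemma funpow2_return_map:
  assumes "\<mu> = - \<alpha>" "a \<bullet> x = 0"
  shows "(return_map ^^ 2) x = \<alpha>\<^sup>2 *\<^sub>R x"
  using funpow_return_map[OF assms(2), of 2] assms(1) by (simp add: numeral_2_eq_2)

lemma funpow_return_map_mem_span_imp:
  assumes "\<alpha> \<noteq> 0" "a \<bullet> x = 0" "b \<bullet> x \<noteq> 0" "return_map x \<notin> span {x}"
    and "0 < k" "(return_map ^^ k) x \<in> span {x}"
  shows "\<mu> = - \<alpha>"
proof -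
  define c where "c = (b \<bullet> x) * (\<Sum>i<k. \<alpha> ^ (k - Suc i) * \<mu> ^ i)"
  have "r \<notin> span {x}"
  proof
    assume "r \<in> span {x}"
    then have "return_map x \<in> span {x}"
      using return_map_on_line[OF assms(2)] by (simp add: span_add span_scale span_base)
    with assms(4) show False by contradiction
  qed
  have "c *\<^sub>R r = (return_map ^^ k) x - \<alpha> ^ k *\<^sub>R x"
    using funpow_return_map[OF assms(2)] by (simp add: c_def)
  also have "\<dots> \<in> span {x}" using assms(6) by (simp add: span_diff span_scale span_base)
  finally have "c = 0"
    using \<open>r \<notin> span {x}\<close> span_scale[of "c *\<^sub>R r" _ "inverse c"] by (cases "c = 0") auto
  then show ?thesis using power_sum_eq_0_imp_eq_neg assms(1,3,5) by (simp add: c_def)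
qed

end

section \<open>Polygons inscribed in two lines\<close>

lemma has_period_eq_4_iff:
  assumes odd: "\<And>k. A (2*k+1) \<noteq> A 0" and two: "A 2 \<noteq> A 0"
    and even: "\<And>k. 0 < k \<Longrightarrow> A (2*k) = A 0 \<Longrightarrow> P" and four: "\<And>i. P \<Longrightarrow> A (i + 4) = A i"
  shows "has_period A n \<longleftrightarrow> n = 4 \<and> P"
proof
  assume "has_period A n"
  then have "0 < n" and "A (0 + n) = A 0" and minimal: "\<And>m. 0 < m \<Longrightarrow> m < n \<Longrightarrow> \<not> (\<forall>i. A (i + m) = A i)"
    unfolding has_period_def by blast+
  then have "A n = A 0" by simp
  have "even n"
  proof (rule ccontr)
    assume "odd n"
    then obtain k where "n = 2*k+1" by (rule oddE)
    with \<open>A n = A 0\<close> odd show False by simp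
  qed
  then obtain k where n: "n = 2*k" by (rule evenE)
  then have P using even[of k] \<open>0 < n\<close> \<open>A n = A 0\<close> by simp
  have "\<not> 4 < n" using minimal[of 4] four[OF \<open>P\<close>] by auto
  moreover have "n \<noteq> 2" using \<open>A n = A 0\<close> two by auto
  ultimately show "n = 4 \<and> P" using n \<open>0 < n\<close> \<open>P\<close> by presburger
next
  assume "n = 4 \<and> P"
  then have n: "n = 4" and P by simp_all
  have "\<not> (\<forall>i. A (i + m) = A i)" if "0 < m" "m < 4" for m
  proof -
    have "m = 1 \<or> m = 2 \<or> m = 3" using that by auto
    then have "A (0 + m) \<noteq> A 0" using odd[of 0] odd[of 1] two by auto
    then show ?thesis by blast
  qed
  then show "has_period A n" unfolding has_period_def n using four[OF \<open>P\<close>] by simp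
qed

lemma next_vertex:
  fixes b p u :: "real^3"
  assumes "proj_point W" "W \<subseteq> {y. b \<bullet> y = 0}" "span {p} \<subseteq> join (span {u}) W"
    and "p \<notin> span {u}" "b \<bullet> p \<noteq> 0"
  shows "W = span {central_proj b p u}"
proof -
  obtain w where w: "W = span {w}" using assms(1) by (rule proj_pointE)
  have "b \<bullet> w = 0" using assms(2) unfolding w span_singleton_subset_hyperplane .
  moreover have "p \<in> span {u, w}" using assms(3) span_base[of p "{p}"] by (auto simp: w join_span_singletons)
  ultimately show ?thesis using span_central_proj[of p u w b] assms(4,5) w by simp
qed

locale inscribed_polygon = projection_pair a b p q
  for a b p q :: "real^3" +
  fixes A :: "nat \<Rightarrow> (real^3) set"
  assumes polygon: "alt_polygon {x. a \<bullet> x = 0} {x. b \<bullet> x = 0} (span {p}) (span {q}) A"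
    and ap: "a \<bullet> p \<noteq> 0" and bp: "b \<bullet> p \<noteq> 0" and aq: "a \<bullet> q \<noteq> 0" and bq: "b \<bullet> q \<noteq> 0"
begin

lemma vertex_point: "proj_point (A i)"
  and vertex_distinct: "A i \<noteq> A (Suc i)"
  and sides_distinct: "join (A i) (A (Suc i)) \<noteq> join (A (Suc i)) (A (Suc (Suc i)))"
  and even_vertex_on_line: "A (2*k) \<subseteq> {x. a \<bullet> x = 0}"
  and odd_vertex_on_line: "A (2*k+1) \<subseteq> {x. b \<bullet> x = 0}"
  and side_through_p: "span {p} \<subseteq> join (A (2*k)) (A (2*k+1))"
  and side_through_q: "span {q} \<subseteq> join (A (2*k+1)) (A (2*k+2))"
  using polygon unfolding alt_polygon_def by blast+

lemma odd_vertex: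
  assumes "A (2*k) = span {x}"
  shows "A (2*k+1) = span {central_proj b p x}"
proof (rule next_vertex[OF vertex_point odd_vertex_on_line _ _ bp])
  show "span {p} \<subseteq> join (span {x}) (A (2*k+1))" using side_through_p[of k] assms by simp
  have "a \<bullet> x = 0" using even_vertex_on_line[of k] assms by simp
  then show "p \<notin> span {x}" using ap by (auto simp: span_singleton)
qed

lemma even_vertex:
  assumes "A (2*k+1) = span {y}"
  shows "A (2*k+2) = span {central_proj a q y}"
proof (rule next_vertex[OF vertex_point _ _ _ aq])
  show "A (2*k+2) \<subseteq> {x. a \<bullet> x = 0}" using even_vertex_on_line[of "Suc k"] by simp
  show "span {q} \<subseteq> join (span {y}) (A (2*k+2))" using side_through_q[of k] assms by simp
  have "b \<bullet> y = 0" using odd_vertex_on_line[of k] assms by simp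
  then show "q \<notin> span {y}" using bq by (auto simp: span_singleton)
qed

lemma vertices:
  assumes "A 0 = span {v}"
  shows "A (2*k) = span {(return_map ^^ k) v}"
    and "A (2*k+1) = span {central_proj b p ((return_map ^^ k) v)}"
proof -
  show even: "A (2*k) = span {(return_map ^^ k) v}"
  proof (induction k)
    case (Suc k)
    have "A (2*k+2) = span {central_proj a q (central_proj b p ((return_map ^^ k) v))}"
      by (rule even_vertex[OF odd_vertex[OF Suc.IH]])
    then show ?case by (simp add: return_map_def [symmetric])
  qed (simp add: assms)
  then show "A (2*k+1) = span {central_proj b p ((return_map ^^ k) v)}" by (rule odd_vertex)
qed

lemma start_vertex:
  obtains v where "A 0 = span {v}" "a \<bullet> v = 0" "b \<bullet> v \<noteq> 0"
proof -
  obtain v where v: "A 0 = span {v}" using vertex_point[of 0] by (rule proj_pointE)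
  moreover have "a \<bullet> v = 0" using even_vertex_on_line[of 0] v by simp
  moreover have "b \<bullet> v \<noteq> 0"
  proof
    assume "b \<bullet> v = 0"
    then have "A 1 = A 0"
      using odd_vertex[of 0 v] v bp by (simp add: central_proj_def span_singleton_scaleR)
    then show False using vertex_distinct[of 0] by simp
  qed
  ultimately show thesis by (rule that)
qed

lemma odd_vertex_ne_start: "A (2*k+1) \<noteq> A 0"
proof
  obtain v where v: "A 0 = span {v}" "b \<bullet> v \<noteq> 0" by (rule start_vertex)
  assume "A (2*k+1) = A 0"
  then have "span {v} \<subseteq> {y. b \<bullet> y = 0}" using odd_vertex_on_line[of k] v(1) by simp
  then show False using v(2) by simp
qed

lemma second_vertex_ne_start: "A 2 \<noteq> A 0"
proof
  assume "A 2 = A 0"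
  then have "join (A 1) (A 2) = join (A 0) (A 1)" by (simp add: join_def Un_commute)
  then show False using sides_distinct[of 0] by (simp add: numeral_2_eq_2)
qed

lemma even_vertex_eq_start:
  assumes "0 < k" "A (2*k) = A 0"
  shows "\<mu> = - \<alpha>"
proof -
  obtain v where v: "A 0 = span {v}" "a \<bullet> v = 0" "b \<bullet> v \<noteq> 0" by (rule start_vertex)
  have "return_map v \<notin> span {v}"
  proof
    assume "return_map v \<in> span {v}"
    moreover have "b \<bullet> return_map v \<noteq> 0"
      using inner_funpow_return_map(2)[OF v(2), of 1] v(3) ap bq by (simp add: \<mu>_def)
    then have "return_map v \<noteq> 0" by auto
    ultimately have "span {return_map v} = span {v}" by (rule span_singleton_eq_of_mem)
    then have "A 2 = A 0" using vertices(1)[OF v(1), of 1] v(1) by simp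
    then show False using second_vertex_ne_start by simp
  qed
  moreover have "(return_map ^^ k) v \<in> span {v}"
    using vertices(1)[OF v(1), of k] assms(2) v(1) span_base[of "(return_map ^^ k) v"] by auto
  moreover have "\<alpha> \<noteq> 0" using aq bp by (simp add: \<alpha>_def)
  ultimately show ?thesis using funpow_return_map_mem_span_imp v(2,3) assms(1) by blast
qed

lemma period_4:
  assumes "\<mu> = - \<alpha>"
  shows "A (i + 4) = A i"
proof -
  obtain v where v: "A 0 = span {v}" "a \<bullet> v = 0" by (rule start_vertex)
  have "\<alpha> \<noteq> 0" using aq bp by (simp add: \<alpha>_def)
  have skip: "(return_map ^^ (k + 2)) v = \<alpha>\<^sup>2 *\<^sub>R (return_map ^^ k) v" for k
  proof -
    have "(return_map ^^ (k + 2)) v = (return_map ^^ 2) ((return_map ^^ k) v)"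
      by (simp only: add.commute[of k] funpow_add comp_apply)
    then show ?thesis using funpow2_return_map[OF assms inner_funpow_return_map(1)[OF v(2)]] by simp
  qed
  show ?thesis
  proof (cases "even i")
    case True
    then obtain k where "i = 2*k" ..
    then have "i + 4 = 2*(k+2)" by simp
    then have "A (i + 4) = span {(return_map ^^ (k + 2)) v}" using vertices(1)[OF v(1)] by metis
    also have "\<dots> = A i" using vertices(1)[OF v(1), of k] \<open>i = 2*k\<close> skip \<open>\<alpha> \<noteq> 0\<close>
      by (simp add: span_singleton_scaleR)
    finally show ?thesis .
  next
    case False
    then obtain k where "i = 2*k+1" using oddE by blast
    then have "i + 4 = 2*(k+2)+1" by simp
    then have "A (i + 4) = span {central_proj b p ((return_map ^^ (k + 2)) v)}"
      using vertices(2)[OF v(1)] by metis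
    also have "\<dots> = A i" using vertices(2)[OF v(1), of k] \<open>i = 2*k+1\<close> skip \<open>\<alpha> \<noteq> 0\<close>
      by (simp add: span_singleton_scaleR central_proj_scaleR)
    finally show ?thesis .
  qed
qed

lemma has_period_iff: "has_period A n \<longleftrightarrow> n = 4 \<and> \<mu> = - \<alpha>"
  using odd_vertex_ne_start second_vertex_ne_start even_vertex_eq_start period_4
  by (rule has_period_eq_4_iff)

end

lemma alt_polygon_has_period_iff:
  assumes "proj_line g" "proj_line h" "proj_point P" "proj_point Q" "P \<noteq> Q"
    and "\<not> P \<subseteq> g" "\<not> P \<subseteq> h" "\<not> Q \<subseteq> g" "\<not> Q \<subseteq> h"
    and "alt_polygon g h P Q A"
  shows "has_period A n \<longleftrightarrow> n = 4 \<and> harmonic_pair P Q (meet g (join P Q)) (meet h (join P Q))"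
proof -
  obtain a where g: "g = {x. a \<bullet> x = 0}" using assms(1) by (rule proj_lineE)
  obtain b where h: "h = {x. b \<bullet> x = 0}" using assms(2) by (rule proj_lineE)
  obtain p where p: "p \<noteq> 0" "P = span {p}" using assms(3) by (rule proj_pointE)
  obtain q where q: "q \<noteq> 0" "Q = span {q}" using assms(4) by (rule proj_pointE)
  have nz: "a \<bullet> p \<noteq> 0" "b \<bullet> p \<noteq> 0" "a \<bullet> q \<noteq> 0" "b \<bullet> q \<noteq> 0"
    using assms(6-9) g h p q by auto
  interpret inscribed_polygon a b p q A
    using assms(10) g h p q nz by unfold_locales simp_all
  show ?thesis
    using has_period_iff harmonic_pair_meet_iff[OF p(1) q(1) _ nz] assms(5) g h p q
    by (simp add: \<alpha>_def \<mu>_def)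
qed

theorem theorem3p15:
  fixes g1 g2 C1 C2 :: "(real^3) set" and A :: "nat \<Rightarrow> (real^3) set" and n :: nat
  assumes "proj_line g1" and "proj_line g2" and "g1 \<noteq> g2"
    and "proj_point C1" and "proj_point C2" and "C1 \<noteq> C2"
    and "\<not> C1 \<subseteq> g1" and "\<not> C1 \<subseteq> g2" and "\<not> C2 \<subseteq> g1" and "\<not> C2 \<subseteq> g2"
    and "inscribed_circumscribed g1 g2 C1 C2 A"
  shows "has_period A n \<longleftrightarrow>
           (n = 4 \<and> harmonic_pair C1 C2 (meet g1 (join C1 C2)) (meet g2 (join C1 C2)))"
proof -
  have join: "join C2 C1 = join C1 C2" by (simp add: join_def Un_commute)
  note swap = harmonic_pair_swap
  from assms(11) show ?thesis
    unfolding inscribed_circumscribed_def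
  proof (elim disjE)
    assume "alt_polygon g1 g2 C1 C2 A"
    then show ?thesis by (rule alt_polygon_has_period_iff[OF assms(1,2,4-10)])
  next
    assume "alt_polygon g2 g1 C1 C2 A"
    then show ?thesis using alt_polygon_has_period_iff[OF assms(2,1,4-6,8,7,10,9)] swap(2) by blast
  next
    assume "alt_polygon g1 g2 C2 C1 A"
    then show ?thesis
      using alt_polygon_has_period_iff[OF assms(1,2,5,4) assms(6)[symmetric] assms(9,10,7,8)] swap(1) join
      by metis
  next
    assume "alt_polygon g2 g1 C2 C1 A"
    then show ?thesis
      using alt_polygon_has_period_iff[OF assms(2,1,5,4) assms(6)[symmetric] assms(10,9,8,7)] swap join
      by metis
  qed
qed

end
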